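(* The diameter of $CK(2,4)$ is $7$. The diameter of $CK(2,3)$ is infinite, and for every $\ell\ge 5$ the diameter of $CK(2,\ell)$ is infinite (i.e. these digraphs are not strongly connected).
   Context: $CK(2,\ell)$ has as vertices all sequences $a_1\ldots a_\ell\in\{0,1,2\}^\ell$ with $a_i\neq a_{i+1}$ for $1\le i\le\ell-1$ and $a_1\ne a_\ell$, and an arc from $a_1\ldots a_\ell$ to $b_1\ldots b_\ell$ iff both are vertices and $b_i=a_{i+1}$ for $1\le i\le \ell-1$. The diameter is the maximum over ordered pairs $(u,v)$ of vertices of the length of a shortest directed $u$–$v$ path, and is infinite if some such path does not exist. *)

theory Defs
  imports Main "HOL-Library.Extended_Nat"
begin

definition ck_vert :: "nat \<Rightarrow> nat list \<Rightarrow> bool" where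
  "ck_vert l a \<longleftrightarrow> length a = l \<and> set a \<subseteq> {0,1,2}
     \<and> (\<forall>i. Suc i < l \<longrightarrow> a ! i \<noteq> a ! Suc i)
     \<and> a ! 0 \<noteq> a ! (l - 1)"

definition ck_arc :: "nat \<Rightarrow> nat list \<Rightarrow> nat list \<Rightarrow> bool" where
  "ck_arc l a b \<longleftrightarrow> ck_vert l a \<and> ck_vert l b
     \<and> (\<forall>i. Suc i < l \<longrightarrow> b ! i = a ! Suc i)"

definition ck_dist :: "nat \<Rightarrow> nat list \<Rightarrow> nat list \<Rightarrow> enat" where
  "ck_dist l u v = (if \<exists>n. (ck_arc l ^^ n) u v
                    then enat (LEAST n. (ck_arc l ^^ n) u v) else \<infinity>)"

definition ck_diameter :: "nat \<Rightarrow> enat" where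
  "ck_diameter l = (SUP p \<in> {(u, v). ck_vert l u \<and> ck_vert l v}. ck_dist l (fst p) (snd p))"

end

theory Submission
  imports Defs
begin

text \<open>Read a vertex as a closed walk on the triangle 0, 1, 2: each letter-to-letter step, including
  the wrap-around from the last letter to the first, goes one way (+1) or the other (-1) round the
  triangle. Along an arc the walk loses one letter x between its neighbours p and q and gains a letter
  y between the same neighbours, and the detour p, x, q winds as much as p, y, q. So the winding number
  is invariant along walks in CK(2,l). For l = 3 and l \<ge> 5 there is a vertex of non-zero winding
  number (e.g. 012, 012012, padded by 01 blocks); its reversal has the opposite winding number and
  cannot be reached from it. For l = 4, breadth-first search from each of the 18 vertices reaches
  every vertex within 7 steps, while 2101 is not reached from 0102 within 6.\<close>

definition step :: "nat \<Rightarrow> nat \<Rightarrow> int" where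
  "step x y = (if y = Suc x mod 3 then 1 else -1)"

fun step_sum :: "nat list \<Rightarrow> int" where
  "step_sum (x # y # r) = step x y + step_sum (y # r)"
| "step_sum _ = 0"

definition winding :: "nat list \<Rightarrow> int" where
  "winding a = step_sum (a @ [hd a])"

lemma step_swap:
  assumes "x \<in> {0,1,2}" "y \<in> {0,1,2}" "x \<noteq> y"
  shows "step y x = - step x y"
  using assms by (simp add: step_def) (elim disjE; simp)

lemma step_detour:
  assumes "{p, q, x, y} \<subseteq> {0,1,2}" "x \<notin> {p, q}" "y \<notin> {p, q}"
  shows "step p x + step x q = step p y + step y q"
  using assms by (simp add: step_def) (elim conjE disjE; simp)

lemma step_sum_append: "step_sum (xs @ y # ys) = step_sum (xs @ [y]) + step_sum (y # ys)"
  by (induction xs rule: step_sum.induct) auto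

lemma step_sum_Cons: "t \<noteq> [] \<Longrightarrow> step_sum (x # t) = step x (hd t) + step_sum t"
  by (cases t) auto

lemma step_sum_snoc: "t \<noteq> [] \<Longrightarrow> step_sum (t @ [y]) = step_sum t + step (last t) y"
  by (induction t rule: step_sum.induct) auto

lemma step_sum_rev:
  "distinct_adj xs \<Longrightarrow> set xs \<subseteq> {0,1,2} \<Longrightarrow> step_sum (rev xs) = - step_sum xs"
proof (induction xs rule: step_sum.induct)
  case (1 x y r)
  have "step_sum (rev (x # y # r)) = step_sum (rev (y # r)) + step y x"
    using step_sum_append[of "rev r" y "[x]"] by simp
  then show ?case using 1 step_swap[of x y] by simp
qed auto

lemma ck_vert_iff:
  "ck_vert l a \<longleftrightarrow> length a = l \<and> set a \<subseteq> {0,1,2} \<and> distinct_adj a \<and> a \<noteq> [] \<and> hd a \<noteq> last a"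
proof (cases "a = []")
  case False
  then have "a ! 0 = hd a" "a ! (length a - 1) = last a"
    by (simp_all add: hd_conv_nth last_conv_nth)
  then show ?thesis unfolding ck_vert_def distinct_adj_conv_nth by auto
qed (cases l; simp add: ck_vert_def)

lemma ck_vert_length:
  assumes "ck_vert l a"
  shows "2 \<le> l"
proof (rule ccontr)
  assume "\<not> 2 \<le> l"
  moreover have "length a = l" "a \<noteq> []" "hd a \<noteq> last a" using assms by (simp_all add: ck_vert_iff)
  ultimately show False by (cases a) (auto simp: Suc_le_eq split: if_splits)
qed

lemma shifted_iff_butlast_eq_tl:
  assumes "length a = l" "length b = l"
  shows "(\<forall>i. Suc i < l \<longrightarrow> b ! i = a ! Suc i) \<longleftrightarrow> butlast b = tl a"
proof
  assume "\<forall>i. Suc i < l \<longrightarrow> b ! i = a ! Suc i"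
  then show "butlast b = tl a"
    using assms by (intro nth_equalityI) (auto simp: nth_butlast nth_tl)
next
  assume shift: "butlast b = tl a"
  show "\<forall>i. Suc i < l \<longrightarrow> b ! i = a ! Suc i"
  proof (intro allI impI)
    fix i assume "Suc i < l"
    then have "b ! i = butlast b ! i" "tl a ! i = a ! Suc i"
      using assms by (simp_all add: nth_butlast nth_tl)
    then show "b ! i = a ! Suc i" using shift by simp
  qed
qed

lemma ck_arc_iff: "ck_arc l a b \<longleftrightarrow> ck_vert l a \<and> ck_vert l b \<and> butlast b = tl a"
  unfolding ck_arc_def using shifted_iff_butlast_eq_tl by (auto simp: ck_vert_def)

lemma winding_ck_arc:
  assumes "ck_arc l a b"
  shows "winding b = winding a"
proof -
  have va: "set a \<subseteq> {0,1,2}" "distinct_adj a" "hd a \<noteq> last a"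
    and vb: "set b \<subseteq> {0,1,2}" "distinct_adj b" "hd b \<noteq> last b"
    and shift: "butlast b = tl a" and len: "2 \<le> length a" "length b = length a"
    using assms ck_vert_length unfolding ck_arc_iff ck_vert_iff by metis+
  obtain x t where a: "a = x # t" using len by (cases a) auto
  define y where "y = last b"
  have t: "t \<noteq> []" and "b \<noteq> []" using len a by auto
  then have b: "b = t @ [y]"
    using shift append_butlast_last_id[of b] unfolding y_def a by simp
  have winding_a: "winding a = step x (hd t) + step_sum t + step (last t) x"
    unfolding winding_def a using t by (simp add: step_sum_Cons step_sum_snoc)
  have winding_b: "winding b = step_sum t + step (last t) y + step y (hd t)"
    using step_sum_snoc[of "t @ [y]" "hd t"] unfolding winding_def b using t by (simp add: step_sum_snoc)
  have "step (last t) x + step x (hd t) = step (last t) y + step y (hd t)"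
  proof (rule step_detour)
    show "{last t, hd t, x, y} \<subseteq> {0,1,2}"
      using va(1) vb(1) hd_in_set[OF t] last_in_set[OF t] unfolding a b by auto
    show "x \<notin> {last t, hd t}" using va(2,3) a t by (auto simp: distinct_adj_Cons)
    show "y \<notin> {last t, hd t}" using vb(2,3) b t by (auto simp: distinct_adj_append_iff)
  qed
  then show ?thesis using winding_a winding_b by simp
qed

lemma winding_relpowp:
  assumes "(ck_arc l ^^ n) u v"
  shows "winding v = winding u"
  using relpowp_imp_rtranclp[OF assms] by (induction rule: rtranclp_induct) (auto dest: winding_ck_arc)

lemma ck_vert_rev: "ck_vert l a \<Longrightarrow> ck_vert l (rev a)"
  by (simp add: ck_vert_iff hd_rev last_rev)

lemma winding_rev:
  assumes "ck_vert l a"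
  shows "winding (rev a) = - winding a"
proof -
  have a: "a \<noteq> []" "set a \<subseteq> {0,1,2}" "distinct_adj a" "hd a \<noteq> last a"
    using assms by (simp_all add: ck_vert_iff)
  then have "distinct_adj (last a # a)" "set (last a # a) \<subseteq> {0,1,2}"
    using last_in_set[OF a(1)] by (simp_all add: distinct_adj_Cons subset_iff)
  then have "step_sum (rev (last a # a)) = - step_sum (last a # a)"
    by (rule step_sum_rev)
  then show ?thesis
    using a(1) unfolding winding_def by (simp add: hd_rev step_sum_Cons step_sum_snoc)
qed

lemma ck_vert_append_01:
  assumes "ck_vert l p" "hd p = 0"
  shows "ck_vert (l + 2) (p @ [0, 1]) \<and> hd (p @ [0, 1]) = 0 \<and> winding (p @ [0, 1]) = winding p"
proof -
  have p: "length p = l" "set p \<subseteq> {0,1,2}" "distinct_adj p" "p \<noteq> []" "last p \<noteq> 0"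
    using assms unfolding ck_vert_iff by metis+
  have "step_sum (p @ [0, 1, 0]) = step_sum (p @ [0])"
    using step_sum_snoc[of "p @ [0, 1]" 0] step_sum_snoc[of "p @ [0]" 1] by (simp add: step_def)
  then show ?thesis
    using p assms(2) by (simp add: ck_vert_iff winding_def distinct_adj_append_iff)
qed

lemma ck_vert_padding:
  assumes "ck_vert l p" "hd p = 0"
  shows "\<exists>q. ck_vert (l + 2 * k) q \<and> hd q = 0 \<and> winding q = winding p"
proof (induction k)
  case 0
  show ?case using assms by (intro exI[of _ p]) simp
next
  case (Suc k)
  then obtain q where q: "ck_vert (l + 2 * k) q" "hd q = 0" "winding q = winding p" by blast
  have "l + 2 * Suc k = l + 2 * k + 2" by simp
  then show ?case using ck_vert_append_01[OF q(1,2)] q(3) by (intro exI[of _ "q @ [0, 1]"]) simp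
qed

lemma ck_dist_le_diameter: "ck_vert l u \<Longrightarrow> ck_vert l v \<Longrightarrow> ck_dist l u v \<le> ck_diameter l"
  unfolding ck_diameter_def by (rule SUP_upper2[of "(u, v)"]) auto

lemma ck_dist_le: "(ck_arc l ^^ n) u v \<Longrightarrow> ck_dist l u v \<le> enat n"
  unfolding ck_dist_def by (auto intro: Least_le)

lemma ck_dist_ge:
  assumes "\<And>m. m < n \<Longrightarrow> \<not> (ck_arc l ^^ m) u v"
  shows "enat n \<le> ck_dist l u v"
proof (cases "\<exists>m. (ck_arc l ^^ m) u v")
  case True
  then have "n \<le> (LEAST m. (ck_arc l ^^ m) u v)"
    using assms by (metis LeastI not_less)
  then show ?thesis using True unfolding ck_dist_def by simp
qed (simp add: ck_dist_def)

lemma ck_diameter_infinite_if_winding: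
  assumes "ck_vert l u" "winding u \<noteq> 0"
  shows "ck_diameter l = \<infinity>"
proof -
  have "\<not> (ck_arc l ^^ n) u (rev u)" for n
  proof
    assume "(ck_arc l ^^ n) u (rev u)"
    then have "winding (rev u) = winding u" by (rule winding_relpowp)
    then show False using winding_rev[OF assms(1)] assms(2) by simp
  qed
  then have "ck_dist l u (rev u) = \<infinity>" by (simp add: ck_dist_def)
  then show ?thesis
    using ck_dist_le_diameter[OF assms(1) ck_vert_rev[OF assms(1)]]
    by (simp add: top.extremum_uniqueI)
qed

lemma ck_diameter_3: "ck_diameter 3 = \<infinity>"
  by (rule ck_diameter_infinite_if_winding[of 3 "[0, 1, 2]"])
    (simp_all add: ck_vert_iff winding_def step_def)

lemma ck_diameter_ge_5:
  assumes "5 \<le> l"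
  shows "ck_diameter l = \<infinity>"
proof -
  obtain p k where p: "ck_vert (length p) p" "hd p = 0" "winding p \<noteq> 0" "l = length p + 2 * k"
  proof (cases "even l")
    case True
    then have "l = 6 + 2 * ((l - 6) div 2)" using assms by presburger
    then show ?thesis
      by (intro that[of "[0, 1, 2, 0, 1, 2]" "(l - 6) div 2"]) (simp_all add: ck_vert_iff winding_def step_def)
  next
    case False
    then have "l = 3 + 2 * ((l - 3) div 2)" using assms by presburger
    then show ?thesis
      by (intro that[of "[0, 1, 2]" "(l - 3) div 2"]) (simp_all add: ck_vert_iff winding_def step_def)
  qed
  then obtain q where "ck_vert l q" "winding q \<noteq> 0"
    using ck_vert_padding[OF p(1,2), of k] by auto
  then show ?thesis by (rule ck_diameter_infinite_if_winding)
qed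

definition ck_vertices :: "nat \<Rightarrow> nat list list" where
  "ck_vertices l = filter (\<lambda>a. distinct_adj a \<and> a \<noteq> [] \<and> hd a \<noteq> last a) (List.n_lists l [0, 1, 2])"

definition ck_successors :: "nat list \<Rightarrow> nat list list" where
  "ck_successors a = filter (\<lambda>b. distinct_adj b \<and> hd b \<noteq> last b) (map (\<lambda>x. tl a @ [x]) [0, 1, 2])"

fun reachable_within :: "nat \<Rightarrow> nat list \<Rightarrow> nat list list" where
  "reachable_within 0 u = [u]"
| "reachable_within (Suc n) u =
     remdups (reachable_within n u @ concat (map ck_successors (reachable_within n u)))"

lemma ck_vert_iff_mem_ck_vertices: "ck_vert l a \<longleftrightarrow> a \<in> set (ck_vertices l)"
  by (auto simp: ck_vert_iff ck_vertices_def set_n_lists)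

lemma mem_ck_successors:
  "b \<in> set (ck_successors a) \<longleftrightarrow>
     (\<exists>x \<in> {0,1,2}. b = tl a @ [x]) \<and> distinct_adj b \<and> hd b \<noteq> last b"
  unfolding ck_successors_def by auto

lemma ck_arc_iff_mem_ck_successors: "ck_arc l a b \<longleftrightarrow> ck_vert l a \<and> b \<in> set (ck_successors a)"
proof
  assume "ck_arc l a b"
  then have a: "ck_vert l a" and b: "ck_vert l b" "butlast b = tl a" by (simp_all add: ck_arc_iff)
  then have "b = tl a @ [last b]" "last b \<in> {0,1,2}"
    unfolding ck_vert_iff by (metis append_butlast_last_id, metis last_in_set subsetD)
  with a b show "ck_vert l a \<and> b \<in> set (ck_successors a)"
    unfolding mem_ck_successors ck_vert_iff by blast
next
  assume "ck_vert l a \<and> b \<in> set (ck_successors a)"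
  then obtain x where a: "ck_vert l a" and x: "x \<in> {0,1,2}" and b: "b = tl a @ [x]"
    and b_cyclic: "distinct_adj b" "hd b \<noteq> last b"
    unfolding mem_ck_successors by blast
  have "set (tl a) \<subseteq> {0,1,2}" "length (tl a) = l - 1" "a \<noteq> []"
    using a list.set_sel(2)[of a] unfolding ck_vert_iff by fastforce+
  then have "ck_vert l b"
    using x b_cyclic ck_vert_length[OF a] unfolding b ck_vert_iff by auto
  with a b show "ck_arc l a b" by (simp add: ck_arc_iff)
qed

lemma ex_relpowp_le_Suc:
  "(\<exists>m \<le> Suc n. (R ^^ m) u v) \<longleftrightarrow>
     (\<exists>m \<le> n. (R ^^ m) u v) \<or> (\<exists>w. (\<exists>m \<le> n. (R ^^ m) u w) \<and> R w v)"
proof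
  assume "\<exists>m \<le> Suc n. (R ^^ m) u v"
  then obtain m where m: "m \<le> Suc n" "(R ^^ m) u v" by blast
  show "(\<exists>m \<le> n. (R ^^ m) u v) \<or> (\<exists>w. (\<exists>m \<le> n. (R ^^ m) u w) \<and> R w v)"
  proof (cases m)
    case (Suc k)
    then show ?thesis using m by (auto elim: relpowp_Suc_E)
  qed (use m in auto)
next
  assume "(\<exists>m \<le> n. (R ^^ m) u v) \<or> (\<exists>w. (\<exists>m \<le> n. (R ^^ m) u w) \<and> R w v)"
  then show "\<exists>m \<le> Suc n. (R ^^ m) u v"
  proof (elim disjE exE conjE)
    fix m assume "m \<le> n" "(R ^^ m) u v"
    then show ?thesis by (intro exI[of _ m]) simp
  next
    fix w m assume "m \<le> n" "(R ^^ m) u w" "R w v"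
    then show ?thesis by (intro exI[of _ "Suc m"]) auto
  qed
qed

lemma ck_vert_relpowp: "(ck_arc l ^^ n) u v \<Longrightarrow> ck_vert l u \<Longrightarrow> ck_vert l v"
  by (induction n arbitrary: v) (auto simp: ck_arc_iff)

lemma mem_reachable_within:
  assumes "ck_vert l u"
  shows "v \<in> set (reachable_within n u) \<longleftrightarrow> (\<exists>m \<le> n. (ck_arc l ^^ m) u v)"
proof (induction n arbitrary: v)
  case (Suc n)
  have arc: "ck_arc l w v \<longleftrightarrow> v \<in> set (ck_successors w)" if "w \<in> set (reachable_within n u)" for w
    using that ck_vert_relpowp[OF _ assms] unfolding Suc.IH ck_arc_iff_mem_ck_successors by blast
  have "v \<in> set (reachable_within (Suc n) u) \<longleftrightarrow>
      v \<in> set (reachable_within n u) \<or> (\<exists>w \<in> set (reachable_within n u). v \<in> set (ck_successors w))"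
    by auto
  also have "\<dots> \<longleftrightarrow>
      (\<exists>m \<le> n. (ck_arc l ^^ m) u v) \<or> (\<exists>w. (\<exists>m \<le> n. (ck_arc l ^^ m) u w) \<and> ck_arc l w v)"
    using arc unfolding Bex_def Suc.IH by blast
  also have "\<dots> \<longleftrightarrow> (\<exists>m \<le> Suc n. (ck_arc l ^^ m) u v)"
    by (rule ex_relpowp_le_Suc[symmetric])
  finally show ?case .
qed auto

lemma ck4_all_within_7: "\<forall>u \<in> set (ck_vertices 4). set (ck_vertices 4) \<subseteq> set (reachable_within 7 u)"
  by code_simp

lemma ck4_far_pair: "[2, 1, 0, 1] \<notin> set (reachable_within 6 [0, 1, 0, 2])"
  by code_simp

lemma ck_diameter_4: "ck_diameter 4 = 7"
proof (rule antisym)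
  show "ck_diameter 4 \<le> 7"
    unfolding ck_diameter_def
  proof (rule SUP_least, clarify)
    fix u v assume uv: "ck_vert 4 u" "ck_vert 4 v"
    then have "v \<in> set (reachable_within 7 u)"
      using ck4_all_within_7 unfolding ck_vert_iff_mem_ck_vertices by blast
    then obtain m where "m \<le> 7" "(ck_arc 4 ^^ m) u v"
      using mem_reachable_within[OF uv(1)] by blast
    then have "ck_dist 4 u v \<le> enat m" "enat m \<le> 7"
      by (simp_all add: ck_dist_le numeral_eq_enat)
    then show "ck_dist 4 (fst (u, v)) (snd (u, v)) \<le> 7" by simp
  qed
next
  have uv: "ck_vert 4 [0, 1, 0, 2]" "ck_vert 4 [2, 1, 0, 1]" by (simp_all add: ck_vert_iff)
  have "\<not> (ck_arc 4 ^^ m) [0, 1, 0, 2] [2, 1, 0, 1]" if "m < 7" for m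
    using that ck4_far_pair mem_reachable_within[OF uv(1)] by force
  then have "enat 7 \<le> ck_dist 4 [0, 1, 0, 2] [2, 1, 0, 1]" by (rule ck_dist_ge)
  then show "7 \<le> ck_diameter 4"
    using ck_dist_le_diameter[OF uv] by (simp add: numeral_eq_enat)
qed

theorem lemma6:
  shows "ck_diameter 4 = 7 \<and> ck_diameter 3 = \<infinity> \<and> (\<forall>l\<ge>5. ck_diameter l = \<infinity>)"
  using ck_diameter_4 ck_diameter_3 ck_diameter_ge_5 by blast

end
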